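(* Let $G=(\sigma,\mu)$ be a complete f-graph with $|\sigma^*|=n$, and let $e=pq\in\mu^*$. Then the f-graph $G/_{pq}=(\sigma_c,\mu_c)$ obtained by fuzzy vertex pooling of $p$ and $q$ is a complete f-graph.
   Context: A f-graph is a triple $G=(\zeta,\sigma,\mu)$ (written $G=(\sigma,\mu)$) with $\sigma:\zeta\to[0,1]$, $\mu:\zeta\times\zeta\to[0,1]$ symmetric, such that $\mu(pq)\le\sigma(p)\wedge\sigma(q)$ for all $p,q$ ($\wedge$ = minimum). $\sigma^*=\{v:\sigma(v)>0\}$ is the vertex set and $\mu^*=\{pq:\mu(pq)>0\}$ the edge set; $N(p)=\{w:\mu(wp)>0\}$. A f-graph is complete (a CFG) if $\mu(uv)=\sigma(u)\wedge\sigma(v)$ for all distinct $u,v\in\sigma^*$. Fuzzy vertex pooling: for distinct $p,q\in\sigma^*$, $G/_{pq}=(\sigma_c,\mu_c)$ has vertex set $(\sigma^*\setminus\{p,q\})\cup\{v_c\}$ with $v_c$ a new vertex; $\sigma_c(v)=\sigma(v)$ for $v\ne v_c$ and $\sigma_c(v_c)=\sigma(p)\wedge\sigma(q)$; for $u,w\in\sigma^*\setminus\{p,q\}$, $\mu_c(uw)=\mu(uw)$; for $w\in\sigma^*\setminus\{p,q\}$, $\mu_c(wv_c)=\mu(wp)$ if $w\in N(p)\setminus N(q)$, $\mu_c(wv_c)=\mu(wq)$ if $w\in N(q)\setminus N(p)$, $\mu_c(wv_c)=\mu(wp)\wedge\mu(wq)$ if $w\in N(p)\cap N(q)$, and $\mu_c(wv_c)=0$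 otherwise (the edge $pq$, if present, disappears). *)

theory Defs
  imports Complex_Main
begin

definition fgraph :: "('a \<Rightarrow> real) \<Rightarrow> ('a \<Rightarrow> 'a \<Rightarrow> real) \<Rightarrow> bool" where
  "fgraph \<sigma> \<mu> \<longleftrightarrow>
     (\<forall>x. 0 \<le> \<sigma> x \<and> \<sigma> x \<le> 1) \<and>
     (\<forall>x y. 0 \<le> \<mu> x y \<and> \<mu> x y \<le> 1) \<and>
     (\<forall>x y. \<mu> x y = \<mu> y x) \<and>
     (\<forall>x y. \<mu> x y \<le> min (\<sigma> x) (\<sigma> y))"

definition vsupp :: "('a \<Rightarrow> real) \<Rightarrow> 'a set" where
  "vsupp \<sigma> = {v. \<sigma> v > 0}"

definition nbhd :: "('a \<Rightarrow> 'a \<Rightarrow> real) \<Rightarrow> 'a \<Rightarrow> 'a set" where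
  "nbhd \<mu> p = {w. \<mu> w p > 0}"

definition complete_fgraph :: "('a \<Rightarrow> real) \<Rightarrow> ('a \<Rightarrow> 'a \<Rightarrow> real) \<Rightarrow> bool" where
  "complete_fgraph \<sigma> \<mu> \<longleftrightarrow> fgraph \<sigma> \<mu> \<and>
     (\<forall>u v. u \<in> vsupp \<sigma> \<longrightarrow> v \<in> vsupp \<sigma> \<longrightarrow> u \<noteq> v \<longrightarrow> \<mu> u v = min (\<sigma> u) (\<sigma> v))"

text \<open>The pooled graph lives on 'a option:
  the old vertex v is Some v, the new vertex v_c is None.\<close>

definition pool_sigma :: "('a \<Rightarrow> real) \<Rightarrow> 'a \<Rightarrow> 'a \<Rightarrow> 'a option \<Rightarrow> real" where
  "pool_sigma \<sigma> p q x = (case x of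
      None \<Rightarrow> min (\<sigma> p) (\<sigma> q)
    | Some v \<Rightarrow> (if v = p \<or> v = q then 0 else \<sigma> v))"

definition pool_edge :: "('a \<Rightarrow> real) \<Rightarrow> ('a \<Rightarrow> 'a \<Rightarrow> real) \<Rightarrow> 'a \<Rightarrow> 'a \<Rightarrow> 'a \<Rightarrow> real" where
  "pool_edge \<sigma> \<mu> p q w =
     (if w \<notin> vsupp \<sigma> - {p, q} then 0
      else if w \<in> nbhd \<mu> p - nbhd \<mu> q then \<mu> w p
      else if w \<in> nbhd \<mu> q - nbhd \<mu> p then \<mu> w q
      else if w \<in> nbhd \<mu> p \<inter> nbhd \<mu> q then min (\<mu> w p) (\<mu> w q)
      else 0)"

definition pool_mu :: "('a \<Rightarrow> real) \<Rightarrow> ('a \<Rightarrow> 'a \<Rightarrow> real) \<Rightarrow> 'a \<Rightarrow> 'a \<Rightarrow>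
    'a option \<Rightarrow> 'a option \<Rightarrow> real" where
  "pool_mu \<sigma> \<mu> p q x y = (case (x, y) of
      (Some u, Some w) \<Rightarrow> (if u \<in> {p, q} \<or> w \<in> {p, q} then 0 else \<mu> u w)
    | (Some w, None) \<Rightarrow> pool_edge \<sigma> \<mu> p q w
    | (None, Some w) \<Rightarrow> pool_edge \<sigma> \<mu> p q w
    | (None, None) \<Rightarrow> 0)"

end

theory Submission
  imports Defs
begin

text \<open>In a complete f-graph every vertex w \<notin> {p, q} of the support is adjacent to both p and q,
  with \<mu>(wp) = min (\<sigma> w) (\<sigma> p) and \<mu>(wq) = min (\<sigma> w) (\<sigma> q).  So only the common-neighbour
  case of the pooling rule occurs, and it gives \<mu>_c(w v_c) = min (\<sigma> w) (min (\<sigma> p) (\<sigma> q)),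
  which is exactly min (\<sigma>_c w) (\<sigma>_c v_c).\<close>

lemma fgraph_vsupp_if_edge:
  assumes "fgraph \<sigma> \<mu>" and "\<mu> p q > 0"
  shows "p \<in> vsupp \<sigma>" and "q \<in> vsupp \<sigma>"
proof -
  have "\<mu> p q \<le> min (\<sigma> p) (\<sigma> q)"
    using assms(1) by (simp add: fgraph_def)
  with assms(2) show "p \<in> vsupp \<sigma>" and "q \<in> vsupp \<sigma>"
    by (auto simp: vsupp_def)
qed

lemma complete_fgraph_pool_edge:
  assumes "complete_fgraph \<sigma> \<mu>" and "p \<in> vsupp \<sigma>" and "q \<in> vsupp \<sigma>"
  shows "pool_edge \<sigma> \<mu> p q w =
    (if w \<in> vsupp \<sigma> - {p, q} then min (\<sigma> w) (min (\<sigma> p) (\<sigma> q)) else 0)"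
proof (cases "w \<in> vsupp \<sigma> - {p, q}")
  case True
  then have "\<mu> w p = min (\<sigma> w) (\<sigma> p)" and "\<mu> w q = min (\<sigma> w) (\<sigma> q)"
    using assms unfolding complete_fgraph_def by auto
  moreover from this have "w \<in> nbhd \<mu> p \<inter> nbhd \<mu> q"
    using True assms(2,3) by (simp add: nbhd_def vsupp_def)
  ultimately show ?thesis
    using True by (simp add: pool_edge_def min.left_commute min.assoc)
qed (auto simp: pool_edge_def)

text \<open>Completeness is needed even here: in general \<mu>(wp) may exceed \<sigma> q, hence \<sigma>_c v_c.\<close>

lemma fgraph_pool:
  assumes "complete_fgraph \<sigma> \<mu>" and "p \<in> vsupp \<sigma>" and "q \<in> vsupp \<sigma>"
  shows "fgraph (pool_sigma \<sigma> p q) (pool_mu \<sigma> \<mu> p q)"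
proof -
  have \<sigma>_range: "0 \<le> \<sigma> x \<and> \<sigma> x \<le> 1" and \<mu>_range: "0 \<le> \<mu> x y \<and> \<mu> x y \<le> 1"
    and \<mu>_sym: "\<mu> x y = \<mu> y x" and \<mu>_le: "\<mu> x y \<le> min (\<sigma> x) (\<sigma> y)" for x y
    using assms(1) unfolding complete_fgraph_def fgraph_def by auto
  note pool_edge = complete_fgraph_pool_edge[OF assms]
  show ?thesis
    unfolding fgraph_def
  proof (intro conjI allI)
    fix x y
    show "0 \<le> pool_sigma \<sigma> p q x" "pool_sigma \<sigma> p q x \<le> 1"
      using \<sigma>_range \<sigma>_range[of p] \<sigma>_range[of q]
      by (auto simp: pool_sigma_def min_le_iff_disj split: option.splits)
    show "0 \<le> pool_mu \<sigma> \<mu> p q x y" "pool_mu \<sigma> \<mu> p q x y \<le> 1"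
      using \<sigma>_range \<mu>_range \<sigma>_range[of p] \<sigma>_range[of q]
      by (auto simp: pool_mu_def pool_edge min_le_iff_disj split: option.splits)
    show "pool_mu \<sigma> \<mu> p q x y = pool_mu \<sigma> \<mu> p q y x"
      using \<mu>_sym by (auto simp: pool_mu_def split: option.splits)
    show "pool_mu \<sigma> \<mu> p q x y \<le> min (pool_sigma \<sigma> p q x) (pool_sigma \<sigma> p q y)"
      using \<sigma>_range \<mu>_le by (auto simp: pool_mu_def pool_sigma_def pool_edge split: option.splits)
  qed
qed

lemma vsupp_pool_sigma:
  assumes "p \<in> vsupp \<sigma>" and "q \<in> vsupp \<sigma>"
  shows "vsupp (pool_sigma \<sigma> p q) = insert None (Some ` (vsupp \<sigma> - {p, q}))"
proof (rule set_eqI)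
  fix x
  show "x \<in> vsupp (pool_sigma \<sigma> p q) \<longleftrightarrow> x \<in> insert None (Some ` (vsupp \<sigma> - {p, q}))"
    using assms by (cases x) (auto simp: vsupp_def pool_sigma_def)
qed

lemma complete_fgraph_pool:
  assumes "complete_fgraph \<sigma> \<mu>" and "p \<in> vsupp \<sigma>" and "q \<in> vsupp \<sigma>"
  shows "complete_fgraph (pool_sigma \<sigma> p q) (pool_mu \<sigma> \<mu> p q)"
proof -
  have old_edge: "\<mu> u w = min (\<sigma> u) (\<sigma> w)"
    if "u \<in> vsupp \<sigma>" "w \<in> vsupp \<sigma>" "u \<noteq> w" for u w
    using assms(1) that by (simp add: complete_fgraph_def)
  note pool_edge = complete_fgraph_pool_edge[OF assms]
  note vsupp_pool = vsupp_pool_sigma[OF assms(2,3)]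
  have "pool_mu \<sigma> \<mu> p q x y = min (pool_sigma \<sigma> p q x) (pool_sigma \<sigma> p q y)"
    if "x \<in> vsupp (pool_sigma \<sigma> p q)" "y \<in> vsupp (pool_sigma \<sigma> p q)" "x \<noteq> y" for x y
  proof (cases x; cases y)
    fix u w assume "x = Some u" "y = Some w"
    with that show ?thesis
      using old_edge[of u w] by (auto simp: vsupp_pool pool_mu_def pool_sigma_def)
  next
    fix w assume "x = None" "y = Some w"
    with that show ?thesis
      by (auto simp: vsupp_pool pool_mu_def pool_sigma_def pool_edge min.commute)
  next
    fix w assume "x = Some w" "y = None"
    with that show ?thesis
      by (auto simp: vsupp_pool pool_mu_def pool_sigma_def pool_edge)
  qed (use that in simp)
  with fgraph_pool[OF assms] show ?thesis
    unfolding complete_fgraph_def by blast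
qed

theorem mainTheorem1:
  fixes \<sigma> :: "'a \<Rightarrow> real" and \<mu> :: "'a \<Rightarrow> 'a \<Rightarrow> real" and p q :: 'a and n :: nat
  assumes "complete_fgraph \<sigma> \<mu>"
    and "finite (vsupp \<sigma>)" and "card (vsupp \<sigma>) = n"
    and "p \<noteq> q" and "\<mu> p q > 0"
  shows "complete_fgraph (pool_sigma \<sigma> p q) (pool_mu \<sigma> \<mu> p q)"
proof -
  have "fgraph \<sigma> \<mu>"
    using assms(1) by (simp add: complete_fgraph_def)
  then have "p \<in> vsupp \<sigma>" and "q \<in> vsupp \<sigma>"
    using assms(5) by (rule fgraph_vsupp_if_edge)+
  with assms(1) show ?thesis
    by (rule complete_fgraph_pool)
qed

end
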